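(* Let $G$ be a bipartite graph with at most one isolated vertex and no connected component consisting of a single edge, and let $s=s(G)$ be its irregularity strength. Then $G$ contains a spanning subgraph $H$ with $m(H)\le 2s-1$. If moreover $G$ is regular, then $G$ contains a spanning subgraph $H$ with $m(H)\le 2s-3$.
   Context: All graphs are finite and simple. For a graph $G$ and integer $k\ge0$, $m(G,k)$ is the number of vertices of degree exactly $k$ in $G$ and $m(G)=\max_k m(G,k)$. For a graph $G=(V,E)$ with at most one isolated vertex and no isolated edges (components isomorphic to $K_2$), the irregularity strength $s(G)$ is the smallest positive integer $s$ such that there is a function $w:E\to\{1,2,\dots,s\}$ for which the sums $\sum_{e\ni v}w(e)$, $v\in V$, are pairwise distinct. *)

theory Defs
  imports Main
begin

definition simple_graph :: "'a set \<Rightarrow> 'a set set \<Rightarrow> bool" where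
  "simple_graph V E \<longleftrightarrow> finite V \<and>
     (\<forall>e\<in>E. \<exists>u v. u \<noteq> v \<and> u \<in> V \<and> v \<in> V \<and> e = {u, v})"

definition deg :: "'a set set \<Rightarrow> 'a \<Rightarrow> nat" where
  "deg E v = card {e \<in> E. v \<in> e}"

definition mult_deg :: "'a set \<Rightarrow> 'a set set \<Rightarrow> nat \<Rightarrow> nat" where
  "mult_deg V E k = card {v \<in> V. deg E v = k}"

definition max_mult :: "'a set \<Rightarrow> 'a set set \<Rightarrow> nat" where
  "max_mult V E = Max (range (mult_deg V E))"

definition bipartite :: "'a set \<Rightarrow> 'a set set \<Rightarrow> bool" where
  "bipartite V E \<longleftrightarrow> (\<exists>A B. A \<inter> B = {} \<and> A \<union> B = V \<and>
      (\<forall>e\<in>E. \<exists>a b. a \<in> A \<and> b \<in> B \<and> e = {a, b}))"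

definition regular :: "'a set \<Rightarrow> 'a set set \<Rightarrow> bool" where
  "regular V E \<longleftrightarrow> (\<exists>k. \<forall>v\<in>V. deg E v = k)"

definition at_most_one_isolated :: "'a set \<Rightarrow> 'a set set \<Rightarrow> bool" where
  "at_most_one_isolated V E \<longleftrightarrow> card {v \<in> V. deg E v = 0} \<le> 1"

text \<open>No component isomorphic to K2: no edge both of whose endpoints have degree 1.\<close>
definition no_isolated_edge :: "'a set \<Rightarrow> 'a set set \<Rightarrow> bool" where
  "no_isolated_edge V E \<longleftrightarrow> \<not> (\<exists>u v. {u, v} \<in> E \<and> u \<noteq> v \<and> deg E u = 1 \<and> deg E v = 1)"

definition irregular_weighting :: "'a set \<Rightarrow> 'a set set \<Rightarrow> nat \<Rightarrow> bool" where
  "irregular_weighting V E s \<longleftrightarrow> (\<exists>w :: 'a set \<Rightarrow> nat.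
      (\<forall>e\<in>E. w e \<in> {1..s}) \<and> inj_on (\<lambda>v. \<Sum>e\<in>{e \<in> E. v \<in> e}. w e) V)"

definition irregularity_strength :: "'a set \<Rightarrow> 'a set set \<Rightarrow> nat" where
  "irregularity_strength V E = (LEAST s. s \<ge> 1 \<and> irregular_weighting V E s)"

end

theory Submission
  imports Defs "HOL-Library.Transitive_Closure_Table" "HOL-Library.Nat_Bijection"
begin

text \<open>Let w be a weighting with values in [1, s] whose weighted degrees separate the vertices.
  In a bipartite graph the fractional subgraph w / s can be rounded: some H \<subseteq> E satisfies
  |s deg_H v - \<Sum>_{e \<ni> v} w e| < s at every vertex v. Take H minimising the sum of the squared
  discrepancies. If the bound failed at a vertex u, the vertices reachable from u by alternating
  paths (leaving one side along H-edges, the other along non-H-edges) could not all have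
  discrepancies of the sign of u's, and flipping an alternating path to a vertex of the opposite
  sign would lower the energy. Vertices of equal H-degree k then have distinct weighted degrees in
  the open interval of radius s around s k, so there are at most 2s - 1 of them. In a regular graph
  the same argument applies to the weights w - 1 in [0, s - 1], which gives 2s - 3.\<close>

text \<open>disc t c E H v is t times the rounding error at v of H as an approximation of the
  fractional subgraph c / t (see disc_eq_deg); as a sum over incident edges it changes locally
  when a single edge is toggled.\<close>
definition edge_disc :: "int \<Rightarrow> ('a set \<Rightarrow> int) \<Rightarrow> 'a set set \<Rightarrow> 'a set \<Rightarrow> int" where
  "edge_disc t c H e = (if e \<in> H then t else 0) - c e"

definition disc :: "int \<Rightarrow> ('a set \<Rightarrow> int) \<Rightarrow> 'a set set \<Rightarrow> 'a set set \<Rightarrow> 'a \<Rightarrow> int" where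
  "disc t c E H v = (\<Sum>e\<in>{e\<in>E. v \<in> e}. edge_disc t c H e)"

lemma disc_eq_deg:
  assumes "H \<subseteq> E" "finite E"
  shows "disc t c E H v = t * int (deg H v) - (\<Sum>e\<in>{e\<in>E. v \<in> e}. c e)"
proof -
  have "(\<Sum>e\<in>{e\<in>E. v \<in> e}. if e \<in> H then t else 0) = t * int (card {e\<in>{e\<in>E. v \<in> e}. e \<in> H})"
    using sum.inter_filter[of "{e\<in>E. v \<in> e}" "\<lambda>_. t" "\<lambda>e. e \<in> H"] assms(2)
    by (simp add: mult.commute)
  also have "{e\<in>{e\<in>E. v \<in> e}. e \<in> H} = {e\<in>H. v \<in> e}"
    using assms(1) by auto
  finally show ?thesis
    by (simp add: disc_def edge_disc_def deg_def sum_subtractf)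
qed

definition toggle :: "'a set set \<Rightarrow> 'a set \<Rightarrow> 'a set set" where
  "toggle H e = (if e \<in> H then H - {e} else insert e H)"

lemma disc_toggle:
  assumes "finite E" "f \<in> E"
  shows "disc t c E (toggle H f) v = disc t c E H v + (if v \<in> f then (if f \<in> H then -t else t) else 0)"
proof (cases "v \<in> f")
  case False
  then show ?thesis
    unfolding disc_def by (auto intro!: sum.cong simp: edge_disc_def toggle_def)
next
  case True
  let ?S = "{e\<in>E. v \<in> e}"
  have fS: "finite ?S" "f \<in> ?S" using True assms by auto
  have rest: "(\<Sum>e\<in>?S - {f}. edge_disc t c (toggle H f) e) = (\<Sum>e\<in>?S - {f}. edge_disc t c H e)"
    by (rule sum.cong) (auto simp: edge_disc_def toggle_def)
  show ?thesis
    unfolding disc_def sum.remove[OF fS] rest using True by (simp add: edge_disc_def toggle_def)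
qed

definition side_sign :: "'a set \<Rightarrow> 'a \<Rightarrow> int" where
  "side_sign P v = (if v \<in> P then 1 else -1)"

definition alt_step :: "'a set set \<Rightarrow> 'a set set \<Rightarrow> 'a set \<Rightarrow> 'a \<Rightarrow> 'a \<Rightarrow> bool" where
  "alt_step E H P x y \<longleftrightarrow> {x, y} \<in> E \<and> ({x, y} \<in> H \<longleftrightarrow> x \<in> P)"

fun flip_path :: "'a set set \<Rightarrow> 'a \<Rightarrow> 'a list \<Rightarrow> 'a set set" where
  "flip_path H x [] = H"
| "flip_path H x (y # ys) = flip_path (toggle H {x, y}) y ys"

lemma alt_path_toggle:
  assumes "rtrancl_path (alt_step E H P) y ys z" "x \<notin> set (y # ys)"
  shows "rtrancl_path (alt_step E (toggle H {x, w}) P) y ys z"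
  using assms
proof (induction rule: rtrancl_path.induct)
  case (base a)
  show ?case by (rule rtrancl_path.base)
next
  case (step a b bs z)
  have "{a, b} \<noteq> {x, w}" using step.prems by auto
  then have "alt_step E (toggle H {x, w}) P a b"
    using step.hyps(1) by (auto simp: alt_step_def toggle_def)
  then show ?case using step by (auto intro: rtrancl_path.step)
qed

lemma flip_path_subset:
  assumes "rtrancl_path (alt_step E H P) x xs z" "distinct (x # xs)" "H \<subseteq> E"
  shows "flip_path H x xs \<subseteq> E"
  using assms
proof (induction xs arbitrary: x H)
  case Nil
  then show ?case by simp
next
  case (Cons y ys)
  from Cons.prems(1) have "alt_step E H P x y" and path: "rtrancl_path (alt_step E H P) y ys z"
    by (auto elim: rtrancl_path.cases)
  then have "toggle H {x, y} \<subseteq> E"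
    using Cons.prems(3) by (auto simp: alt_step_def toggle_def)
  moreover have "rtrancl_path (alt_step E (toggle H {x, y}) P) y ys z"
    by (rule alt_path_toggle[OF path]) (use Cons.prems(2) in auto)
  ultimately show ?case using Cons.IH Cons.prems(2) by simp
qed

lemma disc_flip_path:
  assumes "rtrancl_path (alt_step E H P) x xs z" "distinct (x # xs)" "finite E"
    and "P \<inter> Q = {}" and sides: "\<forall>e\<in>E. \<exists>a b. a \<in> P \<and> b \<in> Q \<and> e = {a, b}"
  shows "disc t c E (flip_path H x xs) v =
           disc t c E H v - (if v = x then t * side_sign P x else 0)
                          + (if v = z then t * side_sign P z else 0)"
  using assms(1,2)
proof (induction xs arbitrary: x H)
  case Nil
  then have "z = x" by (auto elim: rtrancl_path.cases)
  then show ?case by simp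
next
  case (Cons y ys)
  from Cons.prems(1) have step: "alt_step E H P x y" and path: "rtrancl_path (alt_step E H P) y ys z"
    by (auto elim: rtrancl_path.cases)
  have "{x, y} \<in> E" using step by (simp add: alt_step_def)
  then have opposite: "side_sign P y = - side_sign P x"
    using sides \<open>P \<inter> Q = {}\<close> by (fastforce simp: side_sign_def doubleton_eq_iff)
  have toggled: "disc t c E (toggle H {x, y}) v =
      disc t c E H v - (if v \<in> {x, y} then t * side_sign P x else 0)"
    using disc_toggle[OF assms(3) \<open>{x, y} \<in> E\<close>, of t c H v] step
    by (auto simp: alt_step_def side_sign_def)
  have "rtrancl_path (alt_step E (toggle H {x, y}) P) y ys z"
    by (rule alt_path_toggle[OF path]) (use Cons.prems(2) in auto)
  then have "disc t c E (flip_path (toggle H {x, y}) y ys) v =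
      disc t c E (toggle H {x, y}) v - (if v = y then t * side_sign P y else 0)
                                     + (if v = z then t * side_sign P z else 0)"
    using Cons.IH Cons.prems(2) by simp
  then show ?case using toggled opposite Cons.prems(2) by auto
qed

lemma sum_incidence_swap:
  fixes g :: "'a \<Rightarrow> 'b :: semiring_0"
  assumes "finite R" "finite E"
  shows "(\<Sum>y\<in>R. g y * (\<Sum>e\<in>{e\<in>E. y \<in> e}. f e)) = (\<Sum>e\<in>E. \<Sum>y\<in>R \<inter> e. g y * f e)"
proof -
  have "(\<Sum>y\<in>R. g y * (\<Sum>e\<in>{e\<in>E. y \<in> e}. f e)) = (\<Sum>y\<in>R. \<Sum>e\<in>E. if y \<in> e then g y * f e else 0)"
    using assms(2) by (simp add: sum_distrib_left sum.inter_filter[symmetric])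
  also have "\<dots> = (\<Sum>e\<in>E. \<Sum>y\<in>R. if y \<in> e then g y * f e else 0)"
    by (rule sum.swap)
  also have "\<dots> = (\<Sum>e\<in>E. \<Sum>y\<in>R \<inter> e. g y * f e)"
    using assms(1) by (simp add: sum.inter_filter Int_def)
  finally show ?thesis .
qed

lemma signed_disc_nonpos_if_closed:
  assumes "finite R" "finite E" "P \<inter> Q = {}"
    and sides: "\<forall>e\<in>E. \<exists>a b. a \<in> P \<and> b \<in> Q \<and> e = {a, b}"
    and weights: "\<forall>e\<in>E. 0 \<le> c e \<and> c e \<le> t"
    and closed: "\<And>x y. x \<in> R \<Longrightarrow> alt_step E H P x y \<Longrightarrow> y \<in> R"
  shows "(\<Sum>y\<in>R. side_sign P y * disc t c E H y) \<le> 0"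
proof -
  have "(\<Sum>y\<in>R \<inter> e. side_sign P y * edge_disc t c H e) \<le> 0" if "e \<in> E" for e
  proof -
    obtain a b where ab: "a \<in> P" "b \<in> Q" "e = {a, b}" using sides \<open>e \<in> E\<close> by blast
    then have "a \<noteq> b" "b \<notin> P" using \<open>P \<inter> Q = {}\<close> by auto
    consider "a \<in> R" "b \<in> R" | "a \<in> R" "b \<notin> R" | "a \<notin> R" "b \<in> R" | "a \<notin> R" "b \<notin> R"
      by blast
    then show ?thesis
    proof cases
      case 1
      then show ?thesis using ab \<open>a \<noteq> b\<close> \<open>b \<notin> P\<close> by (simp add: side_sign_def)
    next
      case 2
      then have "e \<notin> H" using closed[of a b] ab \<open>e \<in> E\<close> by (auto simp: alt_step_def)
      then show ?thesis using 2 ab weights \<open>e \<in> E\<close> by (auto simp: side_sign_def edge_disc_def)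
    next
      case 3
      then have "e \<in> H"
        using closed[of b a] ab \<open>e \<in> E\<close> \<open>b \<notin> P\<close> by (auto simp: alt_step_def insert_commute)
      then show ?thesis
        using 3 ab \<open>b \<notin> P\<close> weights \<open>e \<in> E\<close> by (auto simp: side_sign_def edge_disc_def)
    next
      case 4
      then show ?thesis using ab by simp
    qed
  qed
  then show ?thesis
    unfolding disc_def sum_incidence_swap[OF assms(1,2)] by (simp add: sum_nonpos)
qed

lemma sum_power2_two_point_update:
  fixes d d' :: "'a \<Rightarrow> int"
  assumes "finite V" "u \<in> V" "y \<in> V" "u \<noteq> y"
    and "\<And>v. d' v = d v - (if v = u then a else 0) + (if v = y then b else 0)"
  shows "(\<Sum>v\<in>V. (d' v)\<^sup>2) = (\<Sum>v\<in>V. (d v)\<^sup>2) + (a\<^sup>2 - 2 * a * d u) + (b\<^sup>2 + 2 * b * d y)"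
proof -
  have "(d' v)\<^sup>2 = (d v)\<^sup>2 + (if v = u then a\<^sup>2 - 2 * a * d u else 0)
                         + (if v = y then b\<^sup>2 + 2 * b * d y else 0)" for v
    unfolding assms(5) using assms(4)
    by (cases "v = u"; cases "v = y") (simp_all add: power2_eq_square algebra_simps)
  then show ?thesis using assms(1-3) by (simp add: sum.distrib)
qed

definition disc_energy :: "int \<Rightarrow> ('a set \<Rightarrow> int) \<Rightarrow> 'a set set \<Rightarrow> 'a set \<Rightarrow> 'a set set \<Rightarrow> int" where
  "disc_energy t c E V H = (\<Sum>v\<in>V. (disc t c E H v)\<^sup>2)"

lemma signed_disc_lt_at_energy_min:
  assumes "finite V" "\<forall>e\<in>E. e \<subseteq> V" "finite E" "P \<inter> Q = {}" "P \<union> Q = V"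
    and sides: "\<forall>e\<in>E. \<exists>a b. a \<in> P \<and> b \<in> Q \<and> e = {a, b}"
    and weights: "\<forall>e\<in>E. 0 \<le> c e \<and> c e \<le> t" and "0 < t" and "H \<subseteq> E"
    and min: "\<And>K. K \<subseteq> E \<Longrightarrow> disc_energy t c E V H \<le> disc_energy t c E V K"
    and "u \<in> V"
  shows "side_sign P u * disc t c E H u < t"
proof (rule ccontr)
  define d where "d = disc t c E H"
  define g where "g = side_sign P"
  assume "\<not> side_sign P u * disc t c E H u < t"
  then have du: "t \<le> g u * d u" by (simp add: d_def g_def)
  define R where "R = {y. (alt_step E H P)\<^sup>*\<^sup>* u y}"
  have "R \<subseteq> V"
  proof
    fix y assume "y \<in> R"
    then have "(alt_step E H P)\<^sup>*\<^sup>* u y" by (simp add: R_def)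
    then show "y \<in> V"
      by (induction rule: rtranclp_induct) (use \<open>u \<in> V\<close> assms(2) in \<open>auto simp: alt_step_def\<close>)
  qed
  then have "finite R" using \<open>finite V\<close> finite_subset by blast
  have signed_sum: "(\<Sum>y\<in>R. g y * d y) \<le> 0"
    unfolding d_def g_def
    by (rule signed_disc_nonpos_if_closed[OF \<open>finite R\<close> \<open>finite E\<close> \<open>P \<inter> Q = {}\<close> sides weights])
      (auto simp: R_def intro: rtranclp.rtrancl_into_rtrancl)
  have "\<exists>y\<in>R. g y * d y < 0"
  proof (rule ccontr)
    assume "\<not> (\<exists>y\<in>R. g y * d y < 0)"
    then have "g u * d u \<le> (\<Sum>y\<in>R. g y * d y)"
      using \<open>finite R\<close> by (intro member_le_sum) (auto simp: R_def not_less)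
    then show False using du \<open>0 < t\<close> signed_sum by linarith
  qed
  then obtain y where "y \<in> R" and dy: "g y * d y < 0" by blast
  then have "y \<noteq> u" using du \<open>0 < t\<close> by auto
  obtain xs where path: "rtrancl_path (alt_step E H P) u xs y" and "distinct (u # xs)"
    using \<open>y \<in> R\<close> rtrancl_path_distinct by (metis R_def mem_Collect_eq rtranclp_eq_rtrancl_path)
  define H' where "H' = flip_path H u xs"
  have "H' \<subseteq> E"
    unfolding H'_def by (rule flip_path_subset[OF path \<open>distinct (u # xs)\<close> \<open>H \<subseteq> E\<close>])
  have "disc_energy t c E V H' =
      disc_energy t c E V H + ((t * g u)\<^sup>2 - 2 * (t * g u) * d u) + ((t * g y)\<^sup>2 + 2 * (t * g y) * d y)"
    unfolding disc_energy_def d_def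
  proof (rule sum_power2_two_point_update)
    show "disc t c E H' v = disc t c E H v - (if v = u then t * g u else 0) + (if v = y then t * g y else 0)" for v
      unfolding H'_def g_def
      by (rule disc_flip_path[OF path \<open>distinct (u # xs)\<close> \<open>finite E\<close> \<open>P \<inter> Q = {}\<close> sides])
  qed (use \<open>finite V\<close> \<open>u \<in> V\<close> \<open>y \<in> R\<close> \<open>R \<subseteq> V\<close> \<open>y \<noteq> u\<close> in auto)
  also have "\<dots> \<le> disc_energy t c E V H - 2 * t"
  proof -
    have "(g v)\<^sup>2 = 1" for v by (simp add: g_def side_sign_def)
    moreover have "t * t \<le> t * (g u * d u)"
      using du \<open>0 < t\<close> by (simp add: mult_left_mono)
    moreover have "t * (g y * d y) \<le> t * -1"
      using dy \<open>0 < t\<close> by (intro mult_left_mono) simp_all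
    ultimately show ?thesis by (simp add: power2_eq_square algebra_simps)
  qed
  finally have "disc_energy t c E V H' < disc_energy t c E V H" using \<open>0 < t\<close> by simp
  with min[OF \<open>H' \<subseteq> E\<close>] show False by simp
qed

lemma bipartite_rounding:
  assumes "finite V" "\<forall>e\<in>E. e \<subseteq> V" "finite E" "P \<inter> Q = {}" "P \<union> Q = V"
    and sides: "\<forall>e\<in>E. \<exists>a b. a \<in> P \<and> b \<in> Q \<and> e = {a, b}"
    and weights: "\<forall>e\<in>E. 0 \<le> c e \<and> c e \<le> t" and "0 < t"
  shows "\<exists>H\<subseteq>E. \<forall>v\<in>V. \<bar>disc t c E H v\<bar> < t"
proof -
  define H where "H = arg_min_on (disc_energy t c E V) (Pow E)"
  have "H \<subseteq> E" using arg_min_if_finite(1)[of "Pow E"] \<open>finite E\<close> by (auto simp: H_def)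
  have min: "disc_energy t c E V H \<le> disc_energy t c E V K" if "K \<subseteq> E" for K
    using arg_min_least[of "Pow E" K] that \<open>finite E\<close> by (auto simp: H_def)
  have sides': "\<forall>e\<in>E. \<exists>a b. a \<in> Q \<and> b \<in> P \<and> e = {a, b}"
    using sides by (metis insert_commute)
  have "\<bar>disc t c E H v\<bar> < t" if "v \<in> V" for v
  proof -
    have "side_sign P v * disc t c E H v < t"
      by (rule signed_disc_lt_at_energy_min[OF assms(1-5) sides weights \<open>0 < t\<close> \<open>H \<subseteq> E\<close> min \<open>v \<in> V\<close>])
    moreover have "side_sign Q v * disc t c E H v < t"
      using assms(1-5) sides' weights \<open>0 < t\<close> \<open>H \<subseteq> E\<close> min \<open>v \<in> V\<close>
      by (intro signed_disc_lt_at_energy_min[of V E Q P]) auto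
    ultimately show ?thesis
      using \<open>v \<in> V\<close> assms(4,5) by (auto simp: side_sign_def split: if_splits)
  qed
  then show ?thesis using \<open>H \<subseteq> E\<close> by blast
qed

lemma max_mult_le:
  assumes "finite V" "\<And>k. mult_deg V H k \<le> m"
  shows "max_mult V H \<le> m"
proof -
  have "range (mult_deg V H) \<subseteq> {..card V}"
    using \<open>finite V\<close> by (auto simp: mult_deg_def intro: card_mono)
  then have "finite (range (mult_deg V H))" using finite_subset by blast
  then show ?thesis using assms(2) by (auto simp: max_mult_def)
qed

lemma mult_deg_le_of_disc_bound:
  assumes "finite E" "H \<subseteq> E" "0 < t"
    and bound: "\<forall>v\<in>V. \<bar>disc t c E H v\<bar> < t"
    and inj: "inj_on (\<lambda>v. \<Sum>e\<in>{e\<in>E. v \<in> e}. c e) V"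
  shows "int (mult_deg V H k) \<le> 2 * t - 1"
proof -
  let ?X = "{v\<in>V. deg H v = k}"
  let ?wdeg = "\<lambda>v. \<Sum>e\<in>{e\<in>E. v \<in> e}. c e"
  have "?wdeg ` ?X \<subseteq> {t * int k - t + 1 .. t * int k + t - 1}"
  proof
    fix x assume "x \<in> ?wdeg ` ?X"
    then obtain v where "v \<in> V" "deg H v = k" "x = ?wdeg v" by auto
    then have "\<bar>t * int k - x\<bar> < t"
      using bound disc_eq_deg[OF \<open>H \<subseteq> E\<close> \<open>finite E\<close>, of t c v] by auto
    then show "x \<in> {t * int k - t + 1 .. t * int k + t - 1}" by auto
  qed
  moreover have "inj_on ?wdeg ?X" using inj by (rule inj_on_subset) auto
  ultimately have "card ?X \<le> card {t * int k - t + 1 .. t * int k + t - 1}"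
    by (intro card_inj_on_le) auto
  then show ?thesis using \<open>0 < t\<close> by (simp add: mult_deg_def le_nat_iff)
qed

lemma simple_graph_finite_edges:
  assumes "simple_graph V E"
  shows "finite V" "\<forall>e\<in>E. e \<subseteq> V" "finite E"
proof -
  show "finite V" "\<forall>e\<in>E. e \<subseteq> V" using assms by (auto simp: simple_graph_def)
  then show "finite E" using finite_subset[of E "Pow V"] by auto
qed

lemma bipartite_subgraph_max_mult_le:
  assumes "simple_graph V E" "bipartite V E"
    and weights: "\<forall>e\<in>E. 0 \<le> c e \<and> c e \<le> t" and "0 < t"
    and inj: "inj_on (\<lambda>v. \<Sum>e\<in>{e\<in>E. v \<in> e}. c e) V"
  shows "\<exists>H\<subseteq>E. int (max_mult V H) \<le> 2 * t - 1"
proof -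
  note finite = simple_graph_finite_edges[OF assms(1)]
  obtain P Q where "P \<inter> Q = {}" "P \<union> Q = V" "\<forall>e\<in>E. \<exists>a b. a \<in> P \<and> b \<in> Q \<and> e = {a, b}"
    using assms(2) by (auto simp: bipartite_def)
  then obtain H where "H \<subseteq> E" and bound: "\<forall>v\<in>V. \<bar>disc t c E H v\<bar> < t"
    using bipartite_rounding[OF finite, of P Q c t] weights \<open>0 < t\<close> by blast
  have "mult_deg V H k \<le> nat (2 * t - 1)" for k
    using mult_deg_le_of_disc_bound[OF finite(3) \<open>H \<subseteq> E\<close> \<open>0 < t\<close> bound inj, of k]
    by (simp add: le_nat_iff)
  then have "max_mult V H \<le> nat (2 * t - 1)" by (rule max_mult_le[OF finite(1)])
  then have "int (max_mult V H) \<le> 2 * t - 1" using \<open>0 < t\<close> by linarith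
  then show ?thesis using \<open>H \<subseteq> E\<close> by blast
qed

lemma incident_edges_inj:
  assumes "simple_graph V E" "at_most_one_isolated V E" "no_isolated_edge V E"
  shows "inj_on (\<lambda>v. {e\<in>E. v \<in> e}) V"
proof (rule inj_onI, rule ccontr)
  fix u v
  assume "u \<in> V" "v \<in> V" and same: "{e\<in>E. u \<in> e} = {e\<in>E. v \<in> e}" and "u \<noteq> v"
  show False
  proof (cases "{e\<in>E. u \<in> e} = {}")
    case True
    then have "deg E u = 0" "deg E v = 0" unfolding deg_def using same by (metis card.empty)+
    then have "{u, v} \<subseteq> {w\<in>V. deg E w = 0}" using \<open>u \<in> V\<close> \<open>v \<in> V\<close> by auto
    then have "card {u, v} \<le> card {w\<in>V. deg E w = 0}"
      using simple_graph_finite_edges(1)[OF assms(1)] by (intro card_mono) auto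
    then show False using assms(2) \<open>u \<noteq> v\<close> by (simp add: at_most_one_isolated_def)
  next
    case False
    have "e = {u, v}" if "e \<in> E" "u \<in> e" for e
    proof -
      obtain a b where "a \<noteq> b" "e = {a, b}"
        using assms(1) \<open>e \<in> E\<close> by (auto simp: simple_graph_def)
      moreover have "v \<in> e" using same that by blast
      ultimately show ?thesis using \<open>u \<in> e\<close> \<open>u \<noteq> v\<close> by auto
    qed
    then have "{e\<in>E. u \<in> e} = {{u, v}}" using False by blast
    then have "{u, v} \<in> E" "deg E u = 1" "deg E v = 1" using same by (auto simp: deg_def)
    then show False using assms(3) \<open>u \<noteq> v\<close> by (auto simp: no_isolated_edge_def)
  qed
qed

text \<open>Numbering the edges and giving the i-th edge weight 2^i makes the weighted degree of
  a vertex the binary code of its set of incident edges.\<close>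
lemma irregular_weighting_pow2:
  assumes "simple_graph V E" "at_most_one_isolated V E" "no_isolated_edge V E"
  shows "irregular_weighting V E (2 ^ card E)"
proof -
  have "finite E" by (rule simple_graph_finite_edges(3)[OF assms(1)])
  then obtain f where f: "bij_betw f E {0..<card E}" using ex_bij_betw_finite_nat by blast
  then have "inj_on f E" by (rule bij_betw_imp_inj_on)
  define w where "w e = (2::nat) ^ f e" for e
  have "w e \<in> {1..2 ^ card E}" if "e \<in> E" for e
    using bij_betwE[OF f] that by (auto simp: w_def)
  moreover have "inj_on (\<lambda>v. \<Sum>e\<in>{e\<in>E. v \<in> e}. w e) V"
  proof -
    have code: "(\<Sum>e\<in>{e\<in>E. v \<in> e}. w e) = set_encode (f ` {e\<in>E. v \<in> e})" for v
      using inj_on_subset[OF \<open>inj_on f E\<close>]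
      by (simp add: set_encode_def sum.reindex w_def)
    have encode_inj: "inj_on (\<lambda>S. set_encode (f ` S)) (Pow E)"
    proof (rule inj_onI)
      fix S T assume "S \<in> Pow E" "T \<in> Pow E" "set_encode (f ` S) = set_encode (f ` T)"
      then have "f ` S = f ` T"
        using \<open>finite E\<close> by (subst (asm) set_encode_eq) (auto intro: finite_subset)
      then show "S = T"
        using \<open>S \<in> Pow E\<close> \<open>T \<in> Pow E\<close> \<open>inj_on f E\<close> by (simp add: inj_on_image_eq_iff)
    qed
    have "inj_on ((\<lambda>S. set_encode (f ` S)) \<circ> (\<lambda>v. {e\<in>E. v \<in> e})) V"
      by (rule comp_inj_on[OF incident_edges_inj[OF assms]], rule inj_on_subset[OF encode_inj]) auto
    then show ?thesis by (simp add: code o_def)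
  qed
  ultimately show ?thesis unfolding irregular_weighting_def by blast
qed

lemma irregularity_strength_weighting:
  assumes "simple_graph V E" "at_most_one_isolated V E" "no_isolated_edge V E"
  shows "1 \<le> irregularity_strength V E \<and> irregular_weighting V E (irregularity_strength V E)"
  unfolding irregularity_strength_def
  by (rule LeastI[of "\<lambda>s. 1 \<le> s \<and> irregular_weighting V E s" "2 ^ card E"])
    (simp add: irregular_weighting_pow2[OF assms])

lemma subgraph_max_mult_le_weighting:
  assumes "simple_graph V E" "bipartite V E" "irregular_weighting V E s" "1 \<le> s"
  shows "\<exists>H\<subseteq>E. int (max_mult V H) \<le> 2 * int s - 1"
proof -
  obtain w :: "'a set \<Rightarrow> nat" where "\<forall>e\<in>E. w e \<in> {1..s}"
    and inj: "inj_on (\<lambda>v. \<Sum>e\<in>{e\<in>E. v \<in> e}. w e) V"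
    using assms(3) by (auto simp: irregular_weighting_def)
  moreover have "inj_on (\<lambda>v. \<Sum>e\<in>{e\<in>E. v \<in> e}. int (w e)) V"
    using inj by (simp add: inj_on_def flip: of_nat_sum)
  ultimately show ?thesis
    using assms(4) by (intro bipartite_subgraph_max_mult_le[OF assms(1,2)]) auto
qed

lemma regular_irregular_weighting_ge_2:
  assumes "simple_graph V E" "regular V E" "E \<noteq> {}" "irregular_weighting V E s"
  shows "2 \<le> s"
proof (rule ccontr)
  assume "\<not> 2 \<le> s"
  obtain w :: "'a set \<Rightarrow> nat" where w: "\<forall>e\<in>E. w e \<in> {1..s}"
    and inj: "inj_on (\<lambda>v. \<Sum>e\<in>{e\<in>E. v \<in> e}. w e) V"
    using assms(4) by (auto simp: irregular_weighting_def)
  with \<open>\<not> 2 \<le> s\<close> have "\<forall>e\<in>E. w e = 1" by auto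
  then have "(\<Sum>e\<in>{e\<in>E. v \<in> e}. w e) = deg E v" for v by (simp add: deg_def)
  moreover obtain r where "\<forall>v\<in>V. deg E v = r" using assms(2) by (auto simp: regular_def)
  moreover obtain a b where "a \<noteq> b" "a \<in> V" "b \<in> V"
    using assms(1,3) unfolding simple_graph_def by blast
  ultimately show False using inj by (metis inj_onD)
qed

text \<open>In a regular graph, lowering all weights by 1 lowers every weighted degree by the
  common degree, so the weights w - 1, which lie in [0, s - 1], still separate the vertices.\<close>
lemma regular_subgraph_max_mult_le_weighting:
  assumes "simple_graph V E" "bipartite V E" "regular V E" "E \<noteq> {}" "irregular_weighting V E s"
  shows "\<exists>H\<subseteq>E. int (max_mult V H) \<le> 2 * int s - 3"
proof -
  obtain w :: "'a set \<Rightarrow> nat" where w: "\<forall>e\<in>E. w e \<in> {1..s}"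
    and inj: "inj_on (\<lambda>v. \<Sum>e\<in>{e\<in>E. v \<in> e}. w e) V"
    using assms(5) by (auto simp: irregular_weighting_def)
  obtain r where r: "\<forall>v\<in>V. deg E v = r" using assms(3) by (auto simp: regular_def)
  define c where "c e = int (w e) - 1" for e
  have shift: "(\<Sum>e\<in>{e\<in>E. v \<in> e}. c e) = int (\<Sum>e\<in>{e\<in>E. v \<in> e}. w e) - int r"
    if "v \<in> V" for v
    using r that by (simp add: c_def sum_subtractf deg_def)
  have "inj_on (\<lambda>v. \<Sum>e\<in>{e\<in>E. v \<in> e}. c e) V"
  proof (rule inj_onI)
    fix x y assume "x \<in> V" "y \<in> V"
      and "(\<Sum>e\<in>{e\<in>E. x \<in> e}. c e) = (\<Sum>e\<in>{e\<in>E. y \<in> e}. c e)"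
    then have "int (\<Sum>e\<in>{e\<in>E. x \<in> e}. w e) = int (\<Sum>e\<in>{e\<in>E. y \<in> e}. w e)"
      using shift by simp
    then show "x = y" using inj \<open>x \<in> V\<close> \<open>y \<in> V\<close> by (simp only: of_nat_eq_iff inj_onD)
  qed
  moreover have "\<forall>e\<in>E. 0 \<le> c e \<and> c e \<le> int s - 1" using w by (auto simp: c_def)
  moreover have "2 \<le> s" by (rule regular_irregular_weighting_ge_2[OF assms(1,3,4,5)])
  ultimately have "\<exists>H\<subseteq>E. int (max_mult V H) \<le> 2 * (int s - 1) - 1"
    by (intro bipartite_subgraph_max_mult_le[OF assms(1,2)]) auto
  then show ?thesis by simp
qed

theorem theorem1p7:
  fixes V :: "'a set" and E :: "'a set set"
  assumes "simple_graph V E"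
    and "bipartite V E"
    and "at_most_one_isolated V E"
    and "no_isolated_edge V E"
  shows "(\<exists>H \<subseteq> E. int (max_mult V H) \<le> 2 * int (irregularity_strength V E) - 1)
       \<and> (regular V E \<and> E \<noteq> {} \<longrightarrow>
            (\<exists>H \<subseteq> E. int (max_mult V H) \<le> 2 * int (irregularity_strength V E) - 3))"
proof -
  let ?s = "irregularity_strength V E"
  have "1 \<le> ?s" and weighting: "irregular_weighting V E ?s"
    using irregularity_strength_weighting[OF assms(1,3,4)] by auto
  show ?thesis
  proof (intro conjI impI)
    show "\<exists>H\<subseteq>E. int (max_mult V H) \<le> 2 * int ?s - 1"
      by (rule subgraph_max_mult_le_weighting[OF assms(1,2) weighting \<open>1 \<le> ?s\<close>])
    show "\<exists>H\<subseteq>E. int (max_mult V H) \<le> 2 * int ?s - 3" if "regular V E \<and> E \<noteq> {}"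
      using that by (intro regular_subgraph_max_mult_le_weighting[OF assms(1,2) _ _ weighting]) auto
  qed
qed

end
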